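(* Let $R\subseteq\{e,c,w\}$ and let $\{s_1,\ldots,s_n\}\cup\{x\Rightarrow\delta\}$ ($n\ge1$) be a finite set of $\mathcal L^0$-sequents (sequents not containing $!$). Then $\{s_1,\ldots,s_n\}\vdash_{\mathbf{InFNL}_R}x\Rightarrow\delta\iff\ \vdash_{\mathbf{NACCLL}^-_R}x\circ(\tau(s_1)\circ(\tau(s_2)\circ\cdots(\tau(s_{n-1})\circ\tau(s_n))\cdots))\Rightarrow\delta$, and $\{s_1,\ldots,s_n\}\vdash_{\mathbf{CyInFNL}_R}x\Rightarrow\delta\iff\ \vdash_{\mathbf{NACCLL}_R}x\circ(\tau(s_1)\circ(\tau(s_2)\circ\cdots(\tau(s_{n-1})\circ\tau(s_n))\cdots))\Rightarrow\delta$.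
   Context: Formulas: terms over a countably infinite set of variables in $\{\wedge,\vee,\cdot,\backslash,/,!,1,0\}$; $\mathcal L^0$-formulas are those without $!$. Structures: elements of the free unital groupoid $(Fm^\circ,\circ,\varepsilon)$ generated by formulas ($\circ$ non-associative, $\varepsilon$ empty structure and unit). $k$ ranges over structures in the free unital groupoid generated by formulas $!a$ (including $\varepsilon$). A context $u$ is a structure with exactly one hole; $u(x)$ fills it. A sequent is $x\Rightarrow\delta$, $\delta$ a formula or the empty stoup $\epsilon$. For a structure $x$, $\rho(x)$ is the formula obtained by replacing each $\circ$ by $\cdot$ ($\rho(\varepsilon)=1$); $\theta(\epsilon)=0$, $\theta(a)=a$; for $s=(x\Rightarrow\delta)$, $\tau(s)=!(\rho(x)\backslash\theta(\delta))$. $\mathbf{NACILL}^0$: initial sequents $a\Rightarrow a$, $\varepsilon\Rightarrow 1$, $0\Rightarrow\epsilon$; rules (premises / conclusion): (cut) $x\Rightarrow a$, $u(a)\Rightarrow\delta$ / $u(x)\Rightarrow\delta$; $(1\Rightarrow)$ $u(\varepsilon)\Rightarrow\delta$ / $u(1)\Rightarrow\delta$; $(\Rightarrow 0)$ $x\Rightarrow\epsilon$ / $x\Rightarrow 0$; $(\backslash\Rightarrow)$ $x\Rightarrow a$, $u(b)\Rightarrow\delta$ / $u(x\circ(a\backslash b))\Rightarrow\delta$; $(\Rightarrow\backslash)$ $a\circ x\Rightarrow b$ / $x\Rightarrow a\backslash b$; $(/\Rightarrow)$ $x\Rightarrow a$, $u(b)\Rightarrow\delta$ / $u((b/a)\circ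 x)\Rightarrow\delta$; $(\Rightarrow/)$ $x\circ a\Rightarrow b$ / $x\Rightarrow b/a$; $(\cdot\Rightarrow)$ $u(a\circ b)\Rightarrow\delta$ / $u(a\cdot b)\Rightarrow\delta$; $(\Rightarrow\cdot)$ $x\Rightarrow a$, $y\Rightarrow b$ / $x\circ y\Rightarrow a\cdot b$; $(\wedge\Rightarrow)$ $u(a_i)\Rightarrow\delta$ / $u(a_1\wedge a_2)\Rightarrow\delta$; $(\Rightarrow\wedge)$ $x\Rightarrow a$, $x\Rightarrow b$ / $x\Rightarrow a\wedge b$; $(\vee\Rightarrow)$ $u(a)\Rightarrow\delta$, $u(b)\Rightarrow\delta$ / $u(a\vee b)\Rightarrow\delta$; $(\Rightarrow\vee)$ $x\Rightarrow a_i$ / $x\Rightarrow a_1\vee a_2$; $(!\Rightarrow)$ $u(a)\Rightarrow\delta$ / $u(!a)\Rightarrow\delta$; $(\Rightarrow!)$ $k\Rightarrow a$ / $k\Rightarrow !a$; $(kw)$ $u(\varepsilon)\Rightarrow\delta$ / $u(k)\Rightarrow\delta$; $(kc)$ $u(k\circ k)\Rightarrow\delta$ / $u(k)\Rightarrow\delta$; two-directional: $(ke)$ $u(k\circ y)\Rightarrow\delta\leftrightarrow u(y\circ k)\Rightarrow\delta$; $(ka1)$ $u((k\circ y)\circ z)\Rightarrow\delta\leftrightarrow u(k\circ(y\circ z))\Rightarrow\delta$; $(ka2)$ $u((x\circ y)\circ k)\Rightarrow\delta\leftrightarrow u(x\circ(y\circ k))\Rightarrow\delta$. $\mathbf{NACCLL}^-$: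 $\mathbf{NACILL}^0$ plus initial sequents ${\sim}(-a)\Rightarrow a$, $-({\sim}a)\Rightarrow a$, $({\sim}a)/b\Rightarrow a\backslash(-b)$, $a\backslash(-b)\Rightarrow({\sim}a)/b$, where ${\sim}a:=a\backslash 0$, $-a:=0/a$. $\mathbf{NACCLL}$: additionally ${\sim}a\Rightarrow -a$, $-a\Rightarrow{\sim}a$. $\mathbf{InFNL}$ ($\mathbf{CyInFNL}$): the $!$-free fragment of $\mathbf{NACCLL}^-$ ($\mathbf{NACCLL}$), using only $!$-free formulas and omitting $(!\Rightarrow),(\Rightarrow!),(kw),(kc),(ke),(ka1),(ka2)$. Structural rules: $(e)$ $u(x\circ y)\Rightarrow\delta$ / $u(y\circ x)\Rightarrow\delta$; $(c)$ $u(x\circ x)\Rightarrow\delta$ / $u(x)\Rightarrow\delta$; $(i)$ $u(\varepsilon)\Rightarrow\delta$ / $u(x)\Rightarrow\delta$; $(o)$ $x\Rightarrow\epsilon$ / $x\Rightarrow a$; $(w)$ means both $(i)$ and $(o)$. Subscript $R$ adds the rules in $R$. $\mathcal S\vdash s$: there is a derivation of $s$ whose leaves are initial sequents or members of $\mathcal S$; $\vdash s$ means $\emptyset\vdash s$. *)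

theory Defs
  imports Main
begin

(* Ldiv a b  represents  a \ b ;  Rdiv b a  represents  b / a *)
datatype fm = Var nat | And fm fm | Or fm fm | Dot fm fm | Ldiv fm fm | Rdiv fm fm
  | Bang fm | One | Zero

fun bang_free :: "fm \<Rightarrow> bool" where
  "bang_free (Var n) = True"
| "bang_free (And a b) = (bang_free a \<and> bang_free b)"
| "bang_free (Or a b) = (bang_free a \<and> bang_free b)"
| "bang_free (Dot a b) = (bang_free a \<and> bang_free b)"
| "bang_free (Ldiv a b) = (bang_free a \<and> bang_free b)"
| "bang_free (Rdiv a b) = (bang_free a \<and> bang_free b)"
| "bang_free (Bang a) = False"
| "bang_free One = True"
| "bang_free Zero = True"

definition tneg :: "fm \<Rightarrow> fm" where "tneg a = Ldiv a Zero"
definition mneg :: "fm \<Rightarrow> fm" where "mneg a = Rdiv Zero a"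

(* Nonempty structures are binary trees of formulas; a structure is either the
   empty structure (None) or a nonempty one (Some t).  This is a canonical
   representation of the free unital groupoid: the unit laws are built in via comp. *)
datatype tree = Leaf fm | Node tree tree

type_synonym str = "tree option"

definition comp :: "str \<Rightarrow> str \<Rightarrow> str" where
  "comp x y = (case x of None \<Rightarrow> y
              | Some s \<Rightarrow> (case y of None \<Rightarrow> Some s | Some t \<Rightarrow> Some (Node s t)))"

definition fml :: "fm \<Rightarrow> str" where "fml a = Some (Leaf a)"

fun tree_bf :: "tree \<Rightarrow> bool" where
  "tree_bf (Leaf a) = bang_free a"
| "tree_bf (Node s t) = (tree_bf s \<and> tree_bf t)"

definition str_bf :: "str \<Rightarrow> bool" where
  "str_bf x = (case x of None \<Rightarrow> True | Some t \<Rightarrow> tree_bf t)"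

fun k_tree :: "tree \<Rightarrow> bool" where
  "k_tree (Leaf a) = (\<exists>b. a = Bang b)"
| "k_tree (Node s t) = (k_tree s \<and> k_tree t)"

definition is_k :: "str \<Rightarrow> bool" where
  "is_k x = (case x of None \<Rightarrow> True | Some t \<Rightarrow> k_tree t)"

(* a structure with exactly one hole; sides that are empty vanish by the unit laws *)
datatype ctx = Hole | CL ctx tree | CR tree ctx

fun fill :: "ctx \<Rightarrow> str \<Rightarrow> str" where
  "fill Hole x = x"
| "fill (CL u t) x = comp (fill u x) (Some t)"
| "fill (CR t u) x = comp (Some t) (fill u x)"

(* stoup: Some a is a formula, None is the empty stoup *)
type_synonym seq = "str \<times> fm option"

definition seq_bf :: "seq \<Rightarrow> bool" where
  "seq_bf s = (str_bf (fst s) \<and> (case snd s of None \<Rightarrow> True | Some a \<Rightarrow> bang_free a))"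

fun rho_t :: "tree \<Rightarrow> fm" where
  "rho_t (Leaf a) = a"
| "rho_t (Node s t) = Dot (rho_t s) (rho_t t)"

definition rho :: "str \<Rightarrow> fm" where
  "rho x = (case x of None \<Rightarrow> One | Some t \<Rightarrow> rho_t t)"

definition theta :: "fm option \<Rightarrow> fm" where
  "theta d = (case d of None \<Rightarrow> Zero | Some a \<Rightarrow> a)"

definition tau :: "seq \<Rightarrow> fm" where
  "tau s = Bang (Ldiv (rho (fst s)) (theta (snd s)))"

fun nest :: "seq list \<Rightarrow> tree" where
  "nest [] = Leaf One"
| "nest [s] = Leaf (tau s)"
| "nest (s # t # ts) = Node (Leaf (tau s)) (nest (t # ts))"

datatype srule = E | C | W   (* (e), (c), (w) = (i) and (o) *)

(* rule_inst bg cy R premises conclusion.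
   bg: the exponential ! and its rules (kw,kc,ke,ka1,ka2,!=>,=>!) are present;
   cy: the cyclic axioms ~a => -a, -a => ~a are present.
   The NACCLL^- axioms are always present. *)
inductive rule_inst :: "bool \<Rightarrow> bool \<Rightarrow> srule set \<Rightarrow> seq list \<Rightarrow> seq \<Rightarrow> bool"
  for bg :: bool and cy :: bool and R :: "srule set" where
  ax_id: "rule_inst bg cy R [] (fml a, Some a)"
| ax_one: "rule_inst bg cy R [] (None, Some One)"
| ax_zero: "rule_inst bg cy R [] (fml Zero, None)"
| ax_dn1: "rule_inst bg cy R [] (fml (tneg (mneg a)), Some a)"
| ax_dn2: "rule_inst bg cy R [] (fml (mneg (tneg a)), Some a)"
| ax_cd1: "rule_inst bg cy R [] (fml (Rdiv (tneg a) b), Some (Ldiv a (mneg b)))"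
| ax_cd2: "rule_inst bg cy R [] (fml (Ldiv a (mneg b)), Some (Rdiv (tneg a) b))"
| ax_cy1: "cy \<Longrightarrow> rule_inst bg cy R [] (fml (tneg a), Some (mneg a))"
| ax_cy2: "cy \<Longrightarrow> rule_inst bg cy R [] (fml (mneg a), Some (tneg a))"
| cut: "rule_inst bg cy R [(x, Some a), (fill u (fml a), d)] (fill u x, d)"
| one_l: "rule_inst bg cy R [(fill u None, d)] (fill u (fml One), d)"
| zero_r: "rule_inst bg cy R [(x, None)] (x, Some Zero)"
| ldiv_l: "rule_inst bg cy R [(x, Some a), (fill u (fml b), d)] (fill u (comp x (fml (Ldiv a b))), d)"
| ldiv_r: "rule_inst bg cy R [(comp (fml a) x, Some b)] (x, Some (Ldiv a b))"
| rdiv_l: "rule_inst bg cy R [(x, Some a), (fill u (fml b), d)] (fill u (comp (fml (Rdiv b a)) x), d)"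
| rdiv_r: "rule_inst bg cy R [(comp x (fml a), Some b)] (x, Some (Rdiv b a))"
| dot_l: "rule_inst bg cy R [(fill u (comp (fml a) (fml b)), d)] (fill u (fml (Dot a b)), d)"
| dot_r: "rule_inst bg cy R [(x, Some a), (y, Some b)] (comp x y, Some (Dot a b))"
| and_l1: "rule_inst bg cy R [(fill u (fml a), d)] (fill u (fml (And a b)), d)"
| and_l2: "rule_inst bg cy R [(fill u (fml b), d)] (fill u (fml (And a b)), d)"
| and_r: "rule_inst bg cy R [(x, Some a), (x, Some b)] (x, Some (And a b))"
| or_l: "rule_inst bg cy R [(fill u (fml a), d), (fill u (fml b), d)] (fill u (fml (Or a b)), d)"
| or_r1: "rule_inst bg cy R [(x, Some a)] (x, Some (Or a b))"
| or_r2: "rule_inst bg cy R [(x, Some b)] (x, Some (Or a b))"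
| bang_l: "bg \<Longrightarrow> rule_inst bg cy R [(fill u (fml a), d)] (fill u (fml (Bang a)), d)"
| bang_r: "bg \<Longrightarrow> is_k k \<Longrightarrow> rule_inst bg cy R [(k, Some a)] (k, Some (Bang a))"
| kw: "bg \<Longrightarrow> is_k k \<Longrightarrow> rule_inst bg cy R [(fill u None, d)] (fill u k, d)"
| kc: "bg \<Longrightarrow> is_k k \<Longrightarrow> rule_inst bg cy R [(fill u (comp k k), d)] (fill u k, d)"
| ke1: "bg \<Longrightarrow> is_k k \<Longrightarrow> rule_inst bg cy R [(fill u (comp k y), d)] (fill u (comp y k), d)"
| ke2: "bg \<Longrightarrow> is_k k \<Longrightarrow> rule_inst bg cy R [(fill u (comp y k), d)] (fill u (comp k y), d)"
| ka1a: "bg \<Longrightarrow> is_k k \<Longrightarrow>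
    rule_inst bg cy R [(fill u (comp (comp k y) z), d)] (fill u (comp k (comp y z)), d)"
| ka1b: "bg \<Longrightarrow> is_k k \<Longrightarrow>
    rule_inst bg cy R [(fill u (comp k (comp y z)), d)] (fill u (comp (comp k y) z), d)"
| ka2a: "bg \<Longrightarrow> is_k k \<Longrightarrow>
    rule_inst bg cy R [(fill u (comp (comp x y) k), d)] (fill u (comp x (comp y k)), d)"
| ka2b: "bg \<Longrightarrow> is_k k \<Longrightarrow>
    rule_inst bg cy R [(fill u (comp x (comp y k)), d)] (fill u (comp (comp x y) k), d)"
| exch: "E \<in> R \<Longrightarrow> rule_inst bg cy R [(fill u (comp x y), d)] (fill u (comp y x), d)"
| contr: "C \<in> R \<Longrightarrow> rule_inst bg cy R [(fill u (comp x x), d)] (fill u x, d)"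
| weak_i: "W \<in> R \<Longrightarrow> rule_inst bg cy R [(fill u None, d)] (fill u x, d)"
| weak_o: "W \<in> R \<Longrightarrow> rule_inst bg cy R [(x, None)] (x, Some a)"

(* When bg = False (the !-free fragments InFNL / CyInFNL),
   every sequent occurring in the derivation must be !-free. *)
inductive der :: "bool \<Rightarrow> bool \<Rightarrow> srule set \<Rightarrow> seq set \<Rightarrow> seq \<Rightarrow> bool"
  for bg :: bool and cy :: bool and R :: "srule set" and S :: "seq set" where
  hyp: "s \<in> S \<Longrightarrow> (bg \<or> seq_bf s) \<Longrightarrow> der bg cy R S s"
| rule: "rule_inst bg cy R ps s \<Longrightarrow> (\<forall>p\<in>set ps. der bg cy R S p) \<Longrightarrow> (bg \<or> seq_bf s)
         \<Longrightarrow> der bg cy R S s"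

definition InFNL :: "srule set \<Rightarrow> seq set \<Rightarrow> seq \<Rightarrow> bool" where
  "InFNL R S s = der False False R S s"
definition CyInFNL :: "srule set \<Rightarrow> seq set \<Rightarrow> seq \<Rightarrow> bool" where
  "CyInFNL R S s = der False True R S s"
definition NACCLLm :: "srule set \<Rightarrow> seq \<Rightarrow> bool" where
  "NACCLLm R s = der True False R {} s"
definition NACCLL :: "srule set \<Rightarrow> seq \<Rightarrow> bool" where
  "NACCLL R s = der True True R {} s"

end

theory Submission
  imports Defs
begin

text \<open>
  Write \<open>K\<close> for the nested product of the \<open>\<tau>(s\<^sub>i)\<close>; it is a \<open>k\<close>-structure.

  Left to right: append \<open>K\<close> to every sequent of a derivation in the \<open>!\<close>-free fragment.
  A hypothesis \<open>y \<Rightarrow> \<delta>\<close> becomes \<open>y \<circ> K \<Rightarrow> \<delta>\<close> by unpacking its own \<open>!(\<rho>(y) \ \<theta>(\<delta>))\<close>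
  and weakening in the other factors of \<open>K\<close>. Every rule is simulated in the context extended
  by \<open>K\<close>; when two premises bring two copies of \<open>K\<close>, the exchange and association rules for
  \<open>k\<close>-structures move one copy next to the other and contraction merges them.

  Right to left: interpret the calculus with \<open>!\<close> in the Lindenbaum algebra of the \<open>!\<close>-free
  fragment over the hypotheses, reading \<open>!a\<close> as the unit when \<open>a\<close> is valid and as an absorbing
  element otherwise. This interpretation is sound, and every \<open>\<tau>(s\<^sub>i)\<close> is valid, so \<open>K\<close> is
  interpreted as the unit; hence \<open>x \<circ> K \<Rightarrow> \<delta>\<close> yields \<open>\<rho>(x) \<Rightarrow> \<theta>(\<delta>)\<close> in the fragment.
\<close>

section \<open>Structures and contexts\<close>

declare fml_def [simp]

lemma comp_simps [simp]:
  "comp None y = y" "comp x None = x" "comp (Some s) (Some t) = Some (Node s t)"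
  by (auto simp: comp_def split: option.splits)

lemma str_bf_simps [simp]: "str_bf None" "str_bf (Some t) = tree_bf t"
  by (auto simp: str_bf_def)

lemma str_bf_comp [simp]: "str_bf (comp x y) = (str_bf x \<and> str_bf y)"
  by (auto simp: comp_def str_bf_def split: option.splits)

lemma seq_bf_simps [simp]:
  "seq_bf (x, None) = str_bf x" "seq_bf (x, Some a) = (str_bf x \<and> bang_free a)"
  by (auto simp: seq_bf_def)

lemma bang_free_rho_t [simp]: "bang_free (rho_t t) = tree_bf t"
  by (induction t) auto

lemma bang_free_rho [simp]: "str_bf y \<Longrightarrow> bang_free (rho y)"
  by (cases y) (auto simp: rho_def)

fun ctx_comp :: "ctx \<Rightarrow> ctx \<Rightarrow> ctx" where
  "ctx_comp Hole v = v"
| "ctx_comp (CL u t) v = CL (ctx_comp u v) t"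
| "ctx_comp (CR t u) v = CR t (ctx_comp u v)"

lemma fill_ctx_comp [simp]: "fill (ctx_comp u v) x = fill u (fill v x)"
  by (induction u) auto

definition append_ctx :: "str \<Rightarrow> ctx" where
  "append_ctx y = (case y of None \<Rightarrow> Hole | Some t \<Rightarrow> CL Hole t)"

definition prepend_ctx :: "str \<Rightarrow> ctx" where
  "prepend_ctx y = (case y of None \<Rightarrow> Hole | Some t \<Rightarrow> CR t Hole)"

lemma fill_append_ctx [simp]: "fill (append_ctx y) z = comp z y"
  by (cases y) (auto simp: append_ctx_def)

lemma fill_prepend_ctx [simp]: "fill (prepend_ctx y) z = comp y z"
  by (cases y) (auto simp: prepend_ctx_def)

fun ctx_bf :: "ctx \<Rightarrow> bool" where
  "ctx_bf Hole = True"
| "ctx_bf (CL u t) = (ctx_bf u \<and> tree_bf t)"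
| "ctx_bf (CR t u) = (tree_bf t \<and> ctx_bf u)"

lemma str_bf_fill [simp]: "str_bf (fill u x) = (ctx_bf u \<and> str_bf x)"
  by (induction u) auto

section \<open>Derivations\<close>

text \<open>The equation \<open>s = s'\<close> lets a rule instance close a goal that equals its conclusion only
  up to simplification of \<open>comp\<close> and \<open>fill\<close>.\<close>

lemma der_by_axiom:
  "rule_inst bg cy R [] s \<Longrightarrow> bg \<or> seq_bf s \<Longrightarrow> s = s' \<Longrightarrow> der bg cy R S s'"
  using der.rule by fastforce

lemma der_by_rule1:
  "rule_inst bg cy R [p] s \<Longrightarrow> der bg cy R S p \<Longrightarrow> bg \<or> seq_bf s \<Longrightarrow> s = s'
   \<Longrightarrow> der bg cy R S s'"
  using der.rule by fastforce

lemma der_by_rule2: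
  "rule_inst bg cy R [p, q] s \<Longrightarrow> der bg cy R S p \<Longrightarrow> der bg cy R S q \<Longrightarrow> bg \<or> seq_bf s
   \<Longrightarrow> s = s' \<Longrightarrow> der bg cy R S s'"
  using der.rule by fastforce

lemma der_bang_free: "der False cy R S s \<Longrightarrow> seq_bf s"
  by (cases rule: der.cases) auto

lemma der_id: "bg \<or> bang_free a \<Longrightarrow> der bg cy R S (Some (Leaf a), Some a)"
  by (rule der_by_axiom[OF rule_inst.ax_id]) auto

lemma der_one: "der bg cy R S (None, Some One)"
  by (rule der_by_axiom[OF rule_inst.ax_one]) auto

lemma der_zero: "der bg cy R S (Some (Leaf Zero), None)"
  by (rule der_by_axiom[OF rule_inst.ax_zero]) auto

lemma der_cut_leaf:
  "der bg cy R S (x, Some a) \<Longrightarrow> der bg cy R S (Some (Leaf a), d) \<Longrightarrow> bg \<or> seq_bf (x, d)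
   \<Longrightarrow> der bg cy R S (x, d)"
  by (rule der_by_rule2[OF rule_inst.cut[where u = Hole]]) auto

lemma der_dot_r:
  "der bg cy R S (x, Some a) \<Longrightarrow> der bg cy R S (y, Some b)
   \<Longrightarrow> bg \<or> seq_bf (comp x y, Some (Dot a b)) \<Longrightarrow> der bg cy R S (comp x y, Some (Dot a b))"
  by (rule der_by_rule2[OF rule_inst.dot_r]) auto

lemma der_dot_leaves:
  "bg \<or> bang_free a \<and> bang_free b \<Longrightarrow> der bg cy R S (Some (Node (Leaf a) (Leaf b)), Some (Dot a b))"
  using der_dot_r[of bg cy R S "Some (Leaf a)" a "Some (Leaf b)" b] by (auto intro: der_id)

lemma der_rho_t: "bg \<or> tree_bf t \<Longrightarrow> der bg cy R S (Some t, Some (rho_t t))"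
proof (induction t)
  case (Node s t)
  then have "der bg cy R S (comp (Some s) (Some t), Some (Dot (rho_t s) (rho_t t)))"
    by (intro der_dot_r) auto
  then show ?case by simp
qed (simp add: der_id)

lemma der_rho: "bg \<or> str_bf x \<Longrightarrow> der bg cy R S (x, Some (rho x))"
  by (cases x) (auto simp: rho_def der_one der_rho_t)

lemma der_fill_rho_t:
  "der False cy R S (fill u (Some t), d) \<Longrightarrow> der False cy R S (fill u (fml (rho_t t)), d)"
proof (induction t arbitrary: u)
  case (Node s t)
  have "der False cy R S (fill (ctx_comp u (CL Hole t)) (Some s), d)"
    using Node.prems by simp
  then have "der False cy R S (fill (ctx_comp u (CL Hole t)) (fml (rho_t s)), d)"
    using Node.IH(1) by blast
  then have "der False cy R S (fill (ctx_comp u (CR (Leaf (rho_t s)) Hole)) (Some t), d)"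
    by simp
  then have "der False cy R S (fill (ctx_comp u (CR (Leaf (rho_t s)) Hole)) (fml (rho_t t)), d)"
    using Node.IH(2) by blast
  then have h: "der False cy R S (fill u (comp (fml (rho_t s)) (fml (rho_t t))), d)"
    by simp
  show ?case
    by (rule der_by_rule1[OF rule_inst.dot_l[where u = u and a = "rho_t s" and b = "rho_t t"]])
      (use h der_bang_free[OF h] in \<open>auto simp: seq_bf_def split: option.splits\<close>)
qed simp

lemma der_iff_formula:
  assumes "str_bf x"
  shows "der False cy R S (x, d) \<longleftrightarrow> der False cy R S (fml (rho x), Some (theta d))"
proof
  assume h: "der False cy R S (x, d)"
  have h1: "der False cy R S (fml (rho x), d)"
  proof (cases x)
    case None
    show ?thesis
      by (rule der_by_rule1[OF rule_inst.one_l[where u = Hole]])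
        (use h der_bang_free[OF h] None in \<open>auto simp: rho_def seq_bf_def split: option.splits\<close>)
  next
    case (Some t)
    with der_fill_rho_t[of cy R S Hole t d] h show ?thesis by (simp add: rho_def)
  qed
  show "der False cy R S (fml (rho x), Some (theta d))"
  proof (cases d)
    case None
    show ?thesis
      by (rule der_by_rule1[OF rule_inst.zero_r])
        (use h1 der_bang_free[OF h1] None in \<open>auto simp: theta_def\<close>)
  qed (use h1 in \<open>simp add: theta_def\<close>)
next
  assume h: "der False cy R S (fml (rho x), Some (theta d))"
  have h2: "der False cy R S (x, Some (theta d))"
    by (rule der_cut_leaf[OF der_rho]) (use assms h der_bang_free[OF h] in auto)
  show "der False cy R S (x, d)"
  proof (cases d)
    case None
    have "der False cy R S (x, None)"
      by (rule der_cut_leaf[OF _ der_zero]) (use h2 assms None in \<open>auto simp: theta_def\<close>)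
    with None show ?thesis by simp
  qed (use h2 in \<open>simp add: theta_def\<close>)
qed

section \<open>From hypotheses to a \<open>k\<close>-structure\<close>

lemma rule_inst_with_bang: "rule_inst False cy R ps s \<Longrightarrow> rule_inst True cy R ps s"
  by (induction rule: rule_inst.induct) (auto intro: rule_inst.intros[simplified])

lemma k_tree_nest: "ss \<noteq> [] \<Longrightarrow> k_tree (nest ss)"
  by (induction ss rule: nest.induct) (auto simp: tau_def)

context
  fixes cy :: bool and R :: "srule set" and S :: "seq set" and K :: str
  assumes K: "is_k K"
begin

lemma der_kw: "der True cy R S (fill u None, d) \<Longrightarrow> der True cy R S (fill u K, d)"
  using der.rule[OF rule_inst.kw[OF _ K]] by auto

lemma der_kc: "der True cy R S (fill u (comp K K), d) \<Longrightarrow> der True cy R S (fill u K, d)"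
  using der.rule[OF rule_inst.kc[OF _ K]] by auto

lemma der_ke1: "der True cy R S (fill u (comp K y), d) \<Longrightarrow> der True cy R S (fill u (comp y K), d)"
  using der.rule[OF rule_inst.ke1[OF _ K]] by auto

lemma der_ke2: "der True cy R S (fill u (comp y K), d) \<Longrightarrow> der True cy R S (fill u (comp K y), d)"
  using der.rule[OF rule_inst.ke2[OF _ K]] by auto

lemma der_ka1a:
  "der True cy R S (fill u (comp (comp K y) z), d)
   \<Longrightarrow> der True cy R S (fill u (comp K (comp y z)), d)"
  using der.rule[OF rule_inst.ka1a[OF _ K]] by auto

lemma der_ka1b:
  "der True cy R S (fill u (comp K (comp y z)), d)
   \<Longrightarrow> der True cy R S (fill u (comp (comp K y) z), d)"
  using der.rule[OF rule_inst.ka1b[OF _ K]] by auto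

lemma der_ka2a:
  "der True cy R S (fill u (comp (comp x y) K), d)
   \<Longrightarrow> der True cy R S (fill u (comp x (comp y K)), d)"
  using der.rule[OF rule_inst.ka2a[OF _ K]] by auto

lemma der_ka2b:
  "der True cy R S (fill u (comp x (comp y K)), d)
   \<Longrightarrow> der True cy R S (fill u (comp (comp x y) K), d)"
  using der.rule[OF rule_inst.ka2b[OF _ K]] by auto

lemma der_k_swap_right:
  "der True cy R S (fill w (comp (comp x K) y), d)
   \<Longrightarrow> der True cy R S (fill w (comp (comp x y) K), d)"
proof -
  assume "der True cy R S (fill w (comp (comp x K) y), d)"
  then have "der True cy R S (fill (ctx_comp w (append_ctx y)) (comp x K), d)" by simp
  then have "der True cy R S (fill (ctx_comp w (append_ctx y)) (comp K x), d)" by (rule der_ke2)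
  then have "der True cy R S (fill w (comp K (comp x y)), d)" by (simp add: der_ka1a)
  then show ?thesis by (rule der_ke1)
qed

lemma der_k_swap_left:
  "der True cy R S (fill w (comp (comp x y) K), d)
   \<Longrightarrow> der True cy R S (fill w (comp (comp x K) y), d)"
proof -
  assume "der True cy R S (fill w (comp (comp x y) K), d)"
  then have "der True cy R S (fill w (comp K (comp x y)), d)" by (rule der_ke2)
  then have "der True cy R S (fill w (comp (comp K x) y), d)" by (rule der_ka1b)
  then have "der True cy R S (fill (ctx_comp w (append_ctx y)) (comp K x), d)" by simp
  then have "der True cy R S (fill (ctx_comp w (append_ctx y)) (comp x K), d)" by (rule der_ke1)
  then show ?thesis by simp
qed

lemma der_k_float:
  "der True cy R S (fill w (fill u (comp x K)), d)
   \<Longrightarrow> der True cy R S (fill w (comp (fill u x) K), d)"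
proof (induction u arbitrary: w)
  case (CL u t)
  then have "der True cy R S (fill (ctx_comp w (CL Hole t)) (comp (fill u x) K), d)"
    using CL.IH[of "ctx_comp w (CL Hole t)"] by simp
  then have "der True cy R S (fill w (comp (comp (fill u x) K) (Some t)), d)" by simp
  then show ?case using der_k_swap_right by simp
next
  case (CR t u)
  then have "der True cy R S (fill (ctx_comp w (CR t Hole)) (comp (fill u x) K), d)"
    using CR.IH[of "ctx_comp w (CR t Hole)"] by simp
  then have "der True cy R S (fill w (comp (Some t) (comp (fill u x) K)), d)" by simp
  then show ?case using der_ka2b by simp
qed simp

lemma der_k_contract:
  "der True cy R S (comp (comp x K) K, d) \<Longrightarrow> der True cy R S (comp x K, d)"
  using der_ka2a[of Hole] der_kc[of "prepend_ctx x"] by simp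

lemma der_k_extract:
  "der True cy R S (comp (fill u (comp x K)) K, d) \<Longrightarrow> der True cy R S (comp (fill u x) K, d)"
  using der_k_float[of "append_ctx K" u x] der_k_contract by simp

lemma der_append_k: "der True cy R S (y, d) \<Longrightarrow> der True cy R S (comp y K, d)"
  using der_kw[of "prepend_ctx y"] by simp

lemma der_append_k_rule:
  assumes "rule_inst False cy R ps s"
    and IH: "\<forall>p\<in>set ps. der True cy R S (comp (fst p) K, snd p)"
  shows "der True cy R S (comp (fst s) K, snd s)"
proof -
  have axiom: "der True cy R S (comp (fst s) K, snd s)" if "ps = []"
  proof -
    have "der True cy R S s" using der.rule[OF rule_inst_with_bang[OF assms(1)]] that by simp
    then show ?thesis using der_append_k by (cases s) simp
  qed
  from assms(1) show ?thesis
  proof cases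
    case (cut x a u d)
    have "der True cy R S (fill (ctx_comp (append_ctx K) u) (comp x K), d)"
      by (rule der_by_rule2[OF rule_inst.cut[where x = "comp x K" and a = a
            and u = "ctx_comp (append_ctx K) u" and d = d]]) (use IH cut in auto)
    then show ?thesis using der_k_extract cut by simp
  next
    case (one_l u d)
    show ?thesis
      by (rule der_by_rule1[OF rule_inst.one_l[where u = "ctx_comp (append_ctx K) u" and d = d]])
        (use IH one_l in auto)
  next
    case (zero_r x)
    show ?thesis
      by (rule der_by_rule1[OF rule_inst.zero_r[where x = "comp x K"]]) (use IH zero_r in auto)
  next
    case (ldiv_l x a u b d)
    have "der True cy R S (fill (ctx_comp (append_ctx K) u) (comp (comp x K) (fml (Ldiv a b))), d)"
      by (rule der_by_rule2[OF rule_inst.ldiv_l[where x = "comp x K" and a = a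
            and u = "ctx_comp (append_ctx K) u" and d = d]]) (use IH ldiv_l in auto)
    then have "der True cy R S
        (fill (ctx_comp (append_ctx K) u) (comp (comp x (fml (Ldiv a b))) K), d)"
      by (rule der_k_swap_right)
    then show ?thesis using der_k_extract ldiv_l by simp
  next
    case (ldiv_r a x b)
    then have "der True cy R S (comp (fml a) (comp x K), Some b)"
      using IH der_ka2a[of Hole] by simp
    then have "der True cy R S (comp x K, Some (Ldiv a b))"
      by (rule der_by_rule1[OF rule_inst.ldiv_r]) auto
    then show ?thesis using ldiv_r by simp
  next
    case (rdiv_l x a u b d)
    have "der True cy R S (fill (ctx_comp (append_ctx K) u) (comp (fml (Rdiv b a)) (comp x K)), d)"
      by (rule der_by_rule2[OF rule_inst.rdiv_l[where x = "comp x K" and a = a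
            and u = "ctx_comp (append_ctx K) u" and d = d]]) (use IH rdiv_l in auto)
    then have "der True cy R S
        (fill (ctx_comp (append_ctx K) u) (comp (comp (fml (Rdiv b a)) x) K), d)"
      by (rule der_ka2b)
    then show ?thesis using der_k_extract rdiv_l by simp
  next
    case (rdiv_r x a b)
    then have "der True cy R S (comp (comp x K) (fml a), Some b)"
      using IH der_k_swap_left[of Hole] by simp
    then have "der True cy R S (comp x K, Some (Rdiv b a))"
      by (rule der_by_rule1[OF rule_inst.rdiv_r]) auto
    then show ?thesis using rdiv_r by simp
  next
    case (dot_l u a b d)
    show ?thesis
      by (rule der_by_rule1[OF rule_inst.dot_l[where u = "ctx_comp (append_ctx K) u" and d = d]])
        (use IH dot_l in auto)
  next
    case (dot_r x a y b)
    have "der True cy R S (comp (comp x K) (comp y K), Some (Dot a b))"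
      by (rule der_by_rule2[OF rule_inst.dot_r[where x = "comp x K" and y = "comp y K"]])
        (use IH dot_r in auto)
    then have "der True cy R S (comp (comp x (comp y K)) K, Some (Dot a b))"
      using der_k_swap_right[of Hole] by simp
    then have "der True cy R S (comp (comp (comp x y) K) K, Some (Dot a b))"
      using der_ka2b[of "append_ctx K"] by simp
    then show ?thesis using der_k_contract dot_r by simp
  next
    case (and_l1 u a d b)
    show ?thesis
      by (rule der_by_rule1[OF rule_inst.and_l1[where u = "ctx_comp (append_ctx K) u" and d = d]])
        (use IH and_l1 in auto)
  next
    case (and_l2 u b d a)
    show ?thesis
      by (rule der_by_rule1[OF rule_inst.and_l2[where u = "ctx_comp (append_ctx K) u" and d = d]])
        (use IH and_l2 in auto)
  next
    case (and_r x a b)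
    show ?thesis
      by (rule der_by_rule2[OF rule_inst.and_r[where x = "comp x K"]]) (use IH and_r in auto)
  next
    case (or_l u a d b)
    show ?thesis
      by (rule der_by_rule2[OF rule_inst.or_l[where u = "ctx_comp (append_ctx K) u" and d = d]])
        (use IH or_l in auto)
  next
    case (or_r1 x a b)
    show ?thesis
      by (rule der_by_rule1[OF rule_inst.or_r1[where x = "comp x K"]]) (use IH or_r1 in auto)
  next
    case (or_r2 x b a)
    show ?thesis
      by (rule der_by_rule1[OF rule_inst.or_r2[where x = "comp x K"]]) (use IH or_r2 in auto)
  next
    case (exch u x y d)
    show ?thesis
      by (rule der_by_rule1[OF rule_inst.exch[where u = "ctx_comp (append_ctx K) u" and d = d]])
        (use IH exch in auto)
  next
    case (contr u x d)
    show ?thesis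
      by (rule der_by_rule1[OF rule_inst.contr[where u = "ctx_comp (append_ctx K) u" and d = d]])
        (use IH contr in auto)
  next
    case (weak_i u d x)
    show ?thesis
      by (rule der_by_rule1[OF rule_inst.weak_i[where u = "ctx_comp (append_ctx K) u" and d = d]])
        (use IH weak_i in auto)
  next
    case (weak_o x a)
    show ?thesis
      by (rule der_by_rule1[OF rule_inst.weak_o[where x = "comp x K"]]) (use IH weak_o in auto)
  qed (use axiom in simp_all)
qed

lemma der_append_k_simulation:
  assumes "der False cy R H s"
    and "\<forall>h\<in>H. der True cy R S (comp (fst h) K, snd h)"
  shows "der True cy R S (comp (fst s) K, snd s)"
  using assms(1)
proof (induction rule: der.induct)
  case (rule ps s)
  then show ?case using der_append_k_rule by blast
qed (use assms(2) in blast)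

end

lemma der_nest_of_tau:
  "s \<in> set ss \<Longrightarrow> der True cy R S (fill u (fml (tau s)), d)
   \<Longrightarrow> der True cy R S (fill u (Some (nest ss)), d)"
proof (induction ss arbitrary: u rule: nest.induct)
  case (3 s0 t ts)
  have K: "is_k (Some (nest (t # ts)))" using k_tree_nest[of "t # ts"] by (simp add: is_k_def)
  have K0: "is_k (fml (tau s0))" by (simp add: is_k_def tau_def)
  define v where "v = ctx_comp u (CR (Leaf (tau s0)) Hole)"
  have "der True cy R S (fill v (Some (nest (t # ts))), d)"
  proof (cases "s = s0")
    case True
    with 3 have "der True cy R S (fill v None, d)" by (simp add: v_def)
    then show ?thesis by (rule der_kw[OF K])
  next
    case False
    with 3 have "der True cy R S (fill (ctx_comp u (CL Hole (Leaf (tau s)))) None, d)" by simp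
    then have "der True cy R S (fill (ctx_comp u (CL Hole (Leaf (tau s)))) (fml (tau s0)), d)"
      by (rule der_kw[OF K0])
    then have "der True cy R S (fill v (fml (tau s)), d)" by (simp add: v_def)
    moreover have "s \<in> set (t # ts)" using 3(2) False by simp
    ultimately show ?thesis using 3(1) by blast
  qed
  then show ?case by (simp add: v_def)
qed simp_all

lemma der_hyp_nest:
  assumes "s \<in> set ss"
  shows "der True cy R S (comp (fst s) (Some (nest ss)), snd s)"
proof -
  obtain y d where s: "s = (y, d)" by (cases s)
  have theta: "der True cy R S (fml (theta d), d)"
    by (cases d) (auto simp: theta_def der_zero der_id)
  have ldiv: "der True cy R S (comp y (fml (Ldiv (rho y) (theta d))), d)"
    by (rule der_by_rule2[OF rule_inst.ldiv_l[where x = y and a = "rho y" and u = Hole and d = d]])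
      (use theta der_rho[of True y] in auto)
  have "der True cy R S (comp y (fml (tau s)), d)"
    by (rule der_by_rule1[OF rule_inst.bang_l[where u = "prepend_ctx y" and d = d]])
      (use ldiv in \<open>auto simp: tau_def s\<close>)
  then show ?thesis using der_nest_of_tau[OF assms, of cy R S "prepend_ctx y"] s by simp
qed

section \<open>An algebraic model of the calculus with \<open>!\<close>\<close>

fun strip_bang :: "fm \<Rightarrow> fm" where
  "strip_bang (Var n) = Var n"
| "strip_bang (And a b) = And (strip_bang a) (strip_bang b)"
| "strip_bang (Or a b) = Or (strip_bang a) (strip_bang b)"
| "strip_bang (Dot a b) = Dot (strip_bang a) (strip_bang b)"
| "strip_bang (Ldiv a b) = Ldiv (strip_bang a) (strip_bang b)"
| "strip_bang (Rdiv a b) = Rdiv (strip_bang a) (strip_bang b)"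
| "strip_bang (Bang a) = strip_bang a"
| "strip_bang One = One"
| "strip_bang Zero = Zero"

lemma bang_free_strip_bang [simp]: "bang_free (strip_bang a)"
  by (induction a) auto

lemma strip_bang_id: "bang_free a \<Longrightarrow> strip_bang a = a"
  by (induction a) auto

text \<open>Formulas modulo derivability in the \<open>!\<close>-free fragment, with an adjoined top and an
  absorbing bottom; \<open>Bot\<close> interprets \<open>!a\<close> for non-valid \<open>a\<close> when weakening is absent.\<close>

datatype ext = Bot | Top | Cls fm

fun emul :: "ext \<Rightarrow> ext \<Rightarrow> ext" (infixl "\<odot>" 70) where
  "Bot \<odot> y = Bot"
| "x \<odot> Bot = Bot"
| "Top \<odot> y = Top"
| "x \<odot> Top = Top"
| "Cls a \<odot> Cls b = Cls (Dot a b)"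

fun eldiv :: "ext \<Rightarrow> ext \<Rightarrow> ext" where
  "eldiv Bot z = Top"
| "eldiv x Top = Top"
| "eldiv Top z = Bot"
| "eldiv (Cls a) Bot = Bot"
| "eldiv (Cls a) (Cls b) = Cls (Ldiv a b)"

fun erdiv :: "ext \<Rightarrow> ext \<Rightarrow> ext" where
  "erdiv z Bot = Top"
| "erdiv Top y = Top"
| "erdiv z Top = Bot"
| "erdiv Bot (Cls a) = Bot"
| "erdiv (Cls b) (Cls a) = Cls (Rdiv b a)"

fun emeet :: "ext \<Rightarrow> ext \<Rightarrow> ext" where
  "emeet Bot y = Bot"
| "emeet x Bot = Bot"
| "emeet Top y = y"
| "emeet x Top = x"
| "emeet (Cls a) (Cls b) = Cls (And a b)"

fun ejoin :: "ext \<Rightarrow> ext \<Rightarrow> ext" where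
  "ejoin Top y = Top"
| "ejoin x Top = Top"
| "ejoin Bot y = y"
| "ejoin x Bot = x"
| "ejoin (Cls a) (Cls b) = Cls (Or a b)"

lemma emul_Bot_right [simp]: "x \<odot> Bot = Bot"
  by (cases x) auto

locale bang_free_fragment =
  fixes cy :: bool and R :: "srule set" and S :: "seq set"
begin

abbreviation derives :: "fm \<Rightarrow> fm \<Rightarrow> bool" where
  "derives a b \<equiv> der False cy R S (Some (Leaf a), Some b)"

lemma derives_bang_free: "derives a b \<Longrightarrow> bang_free a \<and> bang_free b"
  using der_bang_free[of cy R S "(Some (Leaf a), Some b)"] by simp

lemma derives_trans: "derives a b \<Longrightarrow> derives b c \<Longrightarrow> derives a c"
  by (rule der_cut_leaf) (auto dest: derives_bang_free)

lemma derives_dot_iff: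
  "derives (Dot a b) c \<longleftrightarrow> der False cy R S (Some (Node (Leaf a) (Leaf b)), Some c)"
proof
  assume h: "derives (Dot a b) c"
  have bf: "bang_free a" "bang_free b" "bang_free c" using derives_bang_free[OF h] by auto
  have "der False cy R S (Some (Node (Leaf a) (Leaf b)), Some (Dot a b))"
    using bf by (intro der_dot_leaves) simp
  then show "der False cy R S (Some (Node (Leaf a) (Leaf b)), Some c)"
    by (rule der_cut_leaf) (use h bf in auto)
next
  assume h: "der False cy R S (Some (Node (Leaf a) (Leaf b)), Some c)"
  show "derives (Dot a b) c"
    by (rule der_by_rule1[OF rule_inst.dot_l[where u = Hole and a = a and b = b]])
      (use h der_bang_free[OF h] in auto)
qed

lemma derives_res_l: "derives (Dot a b) c \<longleftrightarrow> derives b (Ldiv a c)"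
proof
  assume "derives (Dot a b) c"
  then have h: "der False cy R S (Some (Node (Leaf a) (Leaf b)), Some c)"
    using derives_dot_iff by blast
  show "derives b (Ldiv a c)"
    by (rule der_by_rule1[OF rule_inst.ldiv_r[where a = a and x = "fml b" and b = c]])
      (use h der_bang_free[OF h] in auto)
next
  assume h: "derives b (Ldiv a c)"
  have bf: "bang_free a" "bang_free b" "bang_free c" using derives_bang_free[OF h] by auto
  have h2: "der False cy R S (Some (Node (Leaf a) (Leaf (Ldiv a c))), Some c)"
    by (rule der_by_rule2[OF rule_inst.ldiv_l[where x = "fml a" and a = a and b = c and u = Hole]])
      (use bf in \<open>auto intro: der_id\<close>)
  have "der False cy R S (Some (Node (Leaf a) (Leaf b)), Some c)"
    by (rule der_by_rule2[OF rule_inst.cut[where x = "fml b" and a = "Ldiv a c"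
          and u = "CR (Leaf a) Hole" and d = "Some c"]]) (use h h2 bf in auto)
  then show "derives (Dot a b) c" using derives_dot_iff by blast
qed

lemma derives_res_r: "derives (Dot a b) c \<longleftrightarrow> derives a (Rdiv c b)"
proof
  assume "derives (Dot a b) c"
  then have h: "der False cy R S (Some (Node (Leaf a) (Leaf b)), Some c)"
    using derives_dot_iff by blast
  show "derives a (Rdiv c b)"
    by (rule der_by_rule1[OF rule_inst.rdiv_r[where a = b and x = "fml a" and b = c]])
      (use h der_bang_free[OF h] in auto)
next
  assume h: "derives a (Rdiv c b)"
  have bf: "bang_free a" "bang_free b" "bang_free c" using derives_bang_free[OF h] by auto
  have h2: "der False cy R S (Some (Node (Leaf (Rdiv c b)) (Leaf b)), Some c)"
    by (rule der_by_rule2[OF rule_inst.rdiv_l[where x = "fml b" and a = b and b = c and u = Hole]])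
      (use bf in \<open>auto intro: der_id\<close>)
  have "der False cy R S (Some (Node (Leaf a) (Leaf b)), Some c)"
    by (rule der_by_rule2[OF rule_inst.cut[where x = "fml a" and a = "Rdiv c b"
          and u = "CL Hole (Leaf b)" and d = "Some c"]]) (use h h2 bf in auto)
  then show "derives (Dot a b) c" using derives_dot_iff by blast
qed

text \<open>Erasing \<open>!\<close> turns \<open>derives\<close> into a preorder on all formulas; only \<open>!\<close>-free formulas
  will ever occur as values of the interpretation.\<close>

definition entails :: "fm \<Rightarrow> fm \<Rightarrow> bool" where
  "entails a b \<longleftrightarrow> derives (strip_bang a) (strip_bang b)"

lemma entails_refl [simp]: "entails a a"
  unfolding entails_def by (rule der_id) simp

lemma entails_trans: "entails a b \<Longrightarrow> entails b c \<Longrightarrow> entails a c"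
  unfolding entails_def by (rule derives_trans)

lemma entails_res_l: "entails (Dot a b) c \<longleftrightarrow> entails b (Ldiv a c)"
  unfolding entails_def using derives_res_l by simp

lemma entails_res_r: "entails (Dot a b) c \<longleftrightarrow> entails a (Rdiv c b)"
  unfolding entails_def using derives_res_r by simp

lemma entails_and_l1: "entails (And a b) a"
  unfolding entails_def
  by (rule der_by_rule1[OF rule_inst.and_l1[where u = Hole]]) (auto intro: der_id)

lemma entails_and_l2: "entails (And a b) b"
  unfolding entails_def
  by (rule der_by_rule1[OF rule_inst.and_l2[where u = Hole]]) (auto intro: der_id)

lemma entails_and_r: "entails c a \<Longrightarrow> entails c b \<Longrightarrow> entails c (And a b)"
  unfolding entails_def by (rule der_by_rule2[OF rule_inst.and_r]) auto

lemma entails_or_r1: "entails a (Or a b)"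
  unfolding entails_def by (rule der_by_rule1[OF rule_inst.or_r1]) (auto intro: der_id)

lemma entails_or_r2: "entails b (Or a b)"
  unfolding entails_def by (rule der_by_rule1[OF rule_inst.or_r2]) (auto intro: der_id)

lemma entails_or_l: "entails a c \<Longrightarrow> entails b c \<Longrightarrow> entails (Or a b) c"
  unfolding entails_def by (rule der_by_rule2[OF rule_inst.or_l[where u = Hole]]) auto

lemma entails_unit_l1: "entails (Dot One a) a"
  unfolding entails_def strip_bang.simps derives_dot_iff
  by (rule der_by_rule1[OF rule_inst.one_l[where u = "CL Hole (Leaf (strip_bang a))"]])
    (auto intro: der_id)

lemma entails_unit_l2: "entails a (Dot One a)"
  unfolding entails_def using der_dot_r[OF der_one der_id, of False "strip_bang a"] by simp

lemma entails_unit_r1: "entails (Dot a One) a"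
  unfolding entails_def strip_bang.simps derives_dot_iff
  by (rule der_by_rule1[OF rule_inst.one_l[where u = "CR (Leaf (strip_bang a)) Hole"]])
    (auto intro: der_id)

lemma entails_unit_r2: "entails a (Dot a One)"
  unfolding entails_def using der_dot_r[OF der_id der_one, of False "strip_bang a"] by simp

lemma entails_dn1: "entails (Ldiv (Rdiv Zero a) Zero) a"
  unfolding entails_def
  by (rule der_by_axiom[OF rule_inst.ax_dn1]) (auto simp: tneg_def mneg_def)

lemma entails_dn2: "entails (Rdiv Zero (Ldiv a Zero)) a"
  unfolding entails_def
  by (rule der_by_axiom[OF rule_inst.ax_dn2]) (auto simp: tneg_def mneg_def)

lemma entails_cd1: "entails (Rdiv (Ldiv a Zero) b) (Ldiv a (Rdiv Zero b))"
  unfolding entails_def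
  by (rule der_by_axiom[OF rule_inst.ax_cd1]) (auto simp: tneg_def mneg_def)

lemma entails_cd2: "entails (Ldiv a (Rdiv Zero b)) (Rdiv (Ldiv a Zero) b)"
  unfolding entails_def
  by (rule der_by_axiom[OF rule_inst.ax_cd2]) (auto simp: tneg_def mneg_def)

lemma entails_cy1: "cy \<Longrightarrow> entails (Ldiv a Zero) (Rdiv Zero a)"
  unfolding entails_def
  by (rule der_by_axiom[OF rule_inst.ax_cy1]) (auto simp: tneg_def mneg_def)

lemma entails_cy2: "cy \<Longrightarrow> entails (Rdiv Zero a) (Ldiv a Zero)"
  unfolding entails_def
  by (rule der_by_axiom[OF rule_inst.ax_cy2]) (auto simp: tneg_def mneg_def)

lemma entails_exch: "E \<in> R \<Longrightarrow> entails (Dot a b) (Dot b a)"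
  unfolding entails_def strip_bang.simps derives_dot_iff
  by (rule der_by_rule1[OF rule_inst.exch[where u = Hole and x = "fml (strip_bang b)"
        and y = "fml (strip_bang a)"]])
    (auto intro: der_dot_leaves)

lemma entails_contr: "C \<in> R \<Longrightarrow> entails a (Dot a a)"
  unfolding entails_def
  by (rule der_by_rule1[OF rule_inst.contr[where u = Hole and x = "fml (strip_bang a)"]])
    (auto intro: der_dot_leaves)

lemma entails_weak_one: "W \<in> R \<Longrightarrow> entails a One"
  unfolding entails_def
  by (rule der_by_rule1[OF rule_inst.weak_i[where u = Hole]]) (auto intro: der_one)

lemma entails_weak_zero: "W \<in> R \<Longrightarrow> entails Zero a"
  unfolding entails_def
  by (rule der_by_rule1[OF rule_inst.weak_o[where x = "fml Zero"]]) (auto intro: der_zero)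

fun ext_le :: "ext \<Rightarrow> ext \<Rightarrow> bool" (infix "\<sqsubseteq>" 50) where
  "Bot \<sqsubseteq> y = True"
| "x \<sqsubseteq> Top = True"
| "Top \<sqsubseteq> y = False"
| "x \<sqsubseteq> Bot = False"
| "Cls a \<sqsubseteq> Cls b = entails a b"

lemma ext_le_refl [simp]: "x \<sqsubseteq> x"
  by (cases x) auto

lemma ext_le_trans [trans]: "x \<sqsubseteq> y \<Longrightarrow> y \<sqsubseteq> z \<Longrightarrow> x \<sqsubseteq> z"
  by (cases x; cases y; cases z) (auto intro: entails_trans)

lemma ext_res_l: "x \<odot> y \<sqsubseteq> z \<longleftrightarrow> y \<sqsubseteq> eldiv x z"
  by (cases x; cases y; cases z) (auto simp: entails_res_l)

lemma ext_res_r: "x \<odot> y \<sqsubseteq> z \<longleftrightarrow> x \<sqsubseteq> erdiv z y"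
  by (cases x; cases y; cases z) (auto simp: entails_res_r)

lemma emul_mono: "x \<sqsubseteq> x' \<Longrightarrow> y \<sqsubseteq> y' \<Longrightarrow> x \<odot> y \<sqsubseteq> x' \<odot> y'"
proof -
  assume x: "x \<sqsubseteq> x'" and y: "y \<sqsubseteq> y'"
  have "y' \<sqsubseteq> eldiv x' (x' \<odot> y')" using ext_res_l[of x' y' "x' \<odot> y'"] by simp
  then have "y \<sqsubseteq> eldiv x' (x' \<odot> y')" using y ext_le_trans by blast
  then have "x' \<sqsubseteq> erdiv (x' \<odot> y') y" using ext_res_l ext_res_r by blast
  then have "x \<sqsubseteq> erdiv (x' \<odot> y') y" using x ext_le_trans by blast
  then show ?thesis using ext_res_r by blast
qed

lemma ext_unit_l1: "Cls One \<odot> y \<sqsubseteq> y"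
  by (cases y) (auto simp: entails_unit_l1)

lemma ext_unit_l2: "y \<sqsubseteq> Cls One \<odot> y"
  by (cases y) (auto simp: entails_unit_l2)

lemma ext_unit_r1: "y \<odot> Cls One \<sqsubseteq> y"
  by (cases y) (auto simp: entails_unit_r1)

lemma ext_unit_r2: "y \<sqsubseteq> y \<odot> Cls One"
  by (cases y) (auto simp: entails_unit_r2)

lemma emeet_le1: "emeet x y \<sqsubseteq> x"
  by (cases x; cases y) (auto simp: entails_and_l1)

lemma emeet_le2: "emeet x y \<sqsubseteq> y"
  by (cases x; cases y) (auto simp: entails_and_l2)

lemma emeet_greatest: "z \<sqsubseteq> x \<Longrightarrow> z \<sqsubseteq> y \<Longrightarrow> z \<sqsubseteq> emeet x y"
  by (cases x; cases y; cases z) (auto simp: entails_and_r)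

lemma ejoin_ge1: "x \<sqsubseteq> ejoin x y"
  by (cases x; cases y) (auto simp: entails_or_r1)

lemma ejoin_ge2: "y \<sqsubseteq> ejoin x y"
  by (cases x; cases y) (auto simp: entails_or_r2)

lemma ejoin_least: "x \<sqsubseteq> z \<Longrightarrow> y \<sqsubseteq> z \<Longrightarrow> ejoin x y \<sqsubseteq> z"
  by (cases x; cases y; cases z) (auto simp: entails_or_l)

lemma ext_dn1: "eldiv (erdiv (Cls Zero) x) (Cls Zero) \<sqsubseteq> x"
  by (cases x) (auto simp: entails_dn1)

lemma ext_dn2: "erdiv (Cls Zero) (eldiv x (Cls Zero)) \<sqsubseteq> x"
  by (cases x) (auto simp: entails_dn2)

lemma ext_cd1: "erdiv (eldiv x (Cls Zero)) y \<sqsubseteq> eldiv x (erdiv (Cls Zero) y)"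
  by (cases x; cases y) (auto simp: entails_cd1)

lemma ext_cd2: "eldiv x (erdiv (Cls Zero) y) \<sqsubseteq> erdiv (eldiv x (Cls Zero)) y"
  by (cases x; cases y) (auto simp: entails_cd2)

lemma ext_cy1:
  assumes cy shows "eldiv x (Cls Zero) \<sqsubseteq> erdiv (Cls Zero) x"
  by (cases x) (auto simp: entails_cy1[OF assms])

lemma ext_cy2:
  assumes cy shows "erdiv (Cls Zero) x \<sqsubseteq> eldiv x (Cls Zero)"
  by (cases x) (auto simp: entails_cy2[OF assms])

lemma ext_exch: "E \<in> R \<Longrightarrow> x \<odot> y \<sqsubseteq> y \<odot> x"
  by (cases x; cases y) (auto simp: entails_exch)

lemma ext_contr: "C \<in> R \<Longrightarrow> x \<sqsubseteq> x \<odot> x"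
  by (cases x) (auto simp: entails_contr)

section \<open>Interpretation of formulas and structures\<close>

fun interp :: "fm \<Rightarrow> ext" where
  "interp (Var n) = Cls (Var n)"
| "interp (And a b) = emeet (interp a) (interp b)"
| "interp (Or a b) = ejoin (interp a) (interp b)"
| "interp (Dot a b) = interp a \<odot> interp b"
| "interp (Ldiv a b) = eldiv (interp a) (interp b)"
| "interp (Rdiv b a) = erdiv (interp b) (interp a)"
| "interp (Bang a) =
    (if Cls One \<sqsubseteq> interp a then Cls One else if W \<in> R then Cls Zero else Bot)"
| "interp One = Cls One"
| "interp Zero = Cls Zero"

fun interp_tree :: "tree \<Rightarrow> ext" where
  "interp_tree (Leaf a) = interp a"
| "interp_tree (Node s t) = interp_tree s \<odot> interp_tree t"

definition interp_str :: "str \<Rightarrow> ext" where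
  "interp_str x = (case x of None \<Rightarrow> Cls One | Some t \<Rightarrow> interp_tree t)"

definition interp_stoup :: "fm option \<Rightarrow> ext" where
  "interp_stoup d = (case d of None \<Rightarrow> Cls Zero | Some a \<Rightarrow> interp a)"

lemma interp_str_simps [simp]: "interp_str None = Cls One" "interp_str (Some t) = interp_tree t"
  by (auto simp: interp_str_def)

lemma interp_stoup_simps [simp]: "interp_stoup None = Cls Zero" "interp_stoup (Some a) = interp a"
  by (auto simp: interp_stoup_def)

lemma interp_bang_free: "bang_free a \<Longrightarrow> interp a = Cls a"
  by (induction a) auto

lemma interp_tree_bang_free: "tree_bf t \<Longrightarrow> interp_tree t = Cls (rho_t t)"
  by (induction t) (auto simp: interp_bang_free)

lemma interp_str_bang_free: "str_bf x \<Longrightarrow> interp_str x = Cls (rho x)"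
  by (cases x) (auto simp: interp_tree_bang_free rho_def)

lemma interp_stoup_bang_free: "seq_bf (x, d) \<Longrightarrow> interp_stoup d = Cls (theta d)"
  by (cases d) (auto simp: interp_bang_free theta_def)

lemma interp_weak: "W \<in> R \<Longrightarrow> \<exists>c. interp a = Cls c"
  by (induction a) auto

lemma interp_str_weak: "W \<in> R \<Longrightarrow> \<exists>c. interp_str x = Cls c"
proof -
  assume W: "W \<in> R"
  have "\<exists>c. interp_tree t = Cls c" for t
    by (induction t) (use interp_weak[OF W] in auto)
  then show ?thesis by (cases x) auto
qed

lemma interp_comp_le: "interp_str (comp x y) \<sqsubseteq> interp_str x \<odot> interp_str y"
  by (cases x; cases y) (auto simp: ext_unit_l2 ext_unit_r2 entails_unit_l2)

lemma interp_comp_ge: "interp_str x \<odot> interp_str y \<sqsubseteq> interp_str (comp x y)"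
  by (cases x; cases y) (auto simp: ext_unit_l1 ext_unit_r1 entails_unit_l1)

lemma interp_comp_le_iff: "interp_str (comp x y) \<sqsubseteq> z \<longleftrightarrow> interp_str x \<odot> interp_str y \<sqsubseteq> z"
  using interp_comp_le interp_comp_ge ext_le_trans by blast

lemma ctx_residual: "\<exists>g. \<forall>X. interp_str (fill u X) \<sqsubseteq> z \<longleftrightarrow> interp_str X \<sqsubseteq> g"
proof (induction u arbitrary: z)
  case (CL u t)
  obtain g where g: "\<forall>X. interp_str (fill u X) \<sqsubseteq> erdiv z (interp_tree t) \<longleftrightarrow> interp_str X \<sqsubseteq> g"
    using CL by blast
  show ?case
    by (rule exI[of _ g])
      (auto simp: interp_comp_le_iff ext_res_r[symmetric] g[rule_format, symmetric])
next
  case (CR t u)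
  obtain g where g: "\<forall>X. interp_str (fill u X) \<sqsubseteq> eldiv (interp_tree t) z \<longleftrightarrow> interp_str X \<sqsubseteq> g"
    using CR by blast
  show ?case
    by (rule exI[of _ g])
      (auto simp: interp_comp_le_iff ext_res_l[symmetric] g[rule_format, symmetric])
qed auto

lemma ctx_mono:
  "interp_str X \<sqsubseteq> interp_str Y \<Longrightarrow> interp_str (fill u Y) \<sqsubseteq> z \<Longrightarrow> interp_str (fill u X) \<sqsubseteq> z"
  using ctx_residual[of u z] ext_le_trans by blast

lemma ctx_join:
  "interp_str (fill u (fml a)) \<sqsubseteq> z \<Longrightarrow> interp_str (fill u (fml b)) \<sqsubseteq> z
   \<Longrightarrow> interp_str (fill u (fml (Or a b))) \<sqsubseteq> z"
  using ctx_residual[of u z] ejoin_least by fastforce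

lemma entails_weak_absorb_r: "W \<in> R \<Longrightarrow> entails c Zero \<Longrightarrow> entails (Dot b c) Zero"
proof -
  assume W: "W \<in> R" and c: "entails c Zero"
  have "Cls b \<odot> Cls c \<sqsubseteq> Cls b \<odot> Cls Zero" using c by (intro emul_mono) auto
  moreover have "Cls b \<odot> Cls Zero \<sqsubseteq> Cls Zero"
    using ext_res_l[of "Cls b" "Cls Zero" "Cls Zero"] W by (simp add: entails_weak_zero)
  ultimately show ?thesis using ext_le_trans by fastforce
qed

lemma entails_weak_absorb_l: "W \<in> R \<Longrightarrow> entails c Zero \<Longrightarrow> entails (Dot c b) Zero"
proof -
  assume W: "W \<in> R" and c: "entails c Zero"
  have "Cls c \<odot> Cls b \<sqsubseteq> Cls Zero \<odot> Cls b" using c by (intro emul_mono) auto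
  moreover have "Cls Zero \<odot> Cls b \<sqsubseteq> Cls Zero"
    using ext_res_r[of "Cls Zero" "Cls b" "Cls Zero"] W by (simp add: entails_weak_zero)
  ultimately show ?thesis using ext_le_trans by fastforce
qed

lemma entails_weak_from_zero: "W \<in> R \<Longrightarrow> entails a Zero \<Longrightarrow> entails a b"
  using entails_trans entails_weak_zero by blast

lemma entails_weak_absorb:
  assumes "W \<in> R" and "entails c Zero"
  shows "entails (Dot b c) a" "entails (Dot c b) a" "entails (Dot (Dot c b) e) a"
    "entails (Dot c (Dot b e)) a" "entails (Dot (Dot b e) c) a" "entails (Dot b (Dot e c)) a"
  using assms by (meson entails_weak_from_zero entails_weak_absorb_r entails_weak_absorb_l)+

text \<open>Central, idempotent and below the unit: what soundness of the rules for \<open>k\<close> needs.\<close>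

definition k_value :: "ext \<Rightarrow> bool" where
  "k_value z \<longleftrightarrow> (z \<sqsubseteq> Cls One \<and> Cls One \<sqsubseteq> z) \<or> z = Bot \<or> (W \<in> R \<and> z \<sqsubseteq> Cls Zero)"

lemma k_valueE:
  assumes "k_value k"
  obtains "k \<sqsubseteq> Cls One" "Cls One \<sqsubseteq> k"
  | "k = Bot"
  | c where "W \<in> R" "k = Cls c" "entails c Zero"
  using assms unfolding k_value_def by (cases k) auto

lemma unit_equiv_emul:
  assumes "k \<sqsubseteq> Cls One" and "Cls One \<sqsubseteq> k"
  shows "y \<odot> k \<sqsubseteq> y" "y \<sqsubseteq> y \<odot> k" "k \<odot> y \<sqsubseteq> y" "y \<sqsubseteq> k \<odot> y"
  using emul_mono[OF ext_le_refl assms(1), of y] emul_mono[OF ext_le_refl assms(2), of y]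
    emul_mono[OF assms(1) ext_le_refl, of y] emul_mono[OF assms(2) ext_le_refl, of y]
    ext_unit_r1 ext_unit_r2 ext_unit_l1 ext_unit_l2 ext_le_trans
  by blast+

lemma k_value_le_one: "k_value k \<Longrightarrow> k \<sqsubseteq> Cls One"
  by (erule k_valueE) (auto simp: entails_weak_from_zero[of _ One])

lemma k_value_le_square: "k_value k \<Longrightarrow> k \<sqsubseteq> k \<odot> k"
  by (erule k_valueE) (auto simp: unit_equiv_emul entails_weak_from_zero[of _ "Dot _ _"])

lemma k_value_central: "k_value k \<Longrightarrow> y \<odot> k \<sqsubseteq> k \<odot> y \<and> k \<odot> y \<sqsubseteq> y \<odot> k"
proof (erule k_valueE)
  assume "k \<sqsubseteq> Cls One" "Cls One \<sqsubseteq> k"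
  from unit_equiv_emul[OF this] show ?thesis using ext_le_trans by blast
qed (cases y; auto simp: entails_weak_absorb)+

lemma k_value_assoc_left:
  "k_value k \<Longrightarrow> k \<odot> y \<odot> z \<sqsubseteq> k \<odot> (y \<odot> z) \<and> k \<odot> (y \<odot> z) \<sqsubseteq> k \<odot> y \<odot> z"
proof (erule k_valueE)
  assume "k \<sqsubseteq> Cls One" "Cls One \<sqsubseteq> k"
  note k = unit_equiv_emul[OF this]
  have "k \<odot> y \<odot> z \<sqsubseteq> y \<odot> z" "y \<odot> z \<sqsubseteq> k \<odot> y \<odot> z"
    using emul_mono[OF k(3) ext_le_refl] emul_mono[OF k(4) ext_le_refl] by auto
  then show ?thesis using ext_le_trans[OF _ k(4)] ext_le_trans[OF k(3)] by blast
qed (cases y; cases z; auto simp: entails_weak_absorb)+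

lemma k_value_assoc_right:
  "k_value k \<Longrightarrow> x \<odot> y \<odot> k \<sqsubseteq> x \<odot> (y \<odot> k) \<and> x \<odot> (y \<odot> k) \<sqsubseteq> x \<odot> y \<odot> k"
proof (erule k_valueE)
  assume "k \<sqsubseteq> Cls One" "Cls One \<sqsubseteq> k"
  note k = unit_equiv_emul[OF this]
  have "x \<odot> (y \<odot> k) \<sqsubseteq> x \<odot> y" "x \<odot> y \<sqsubseteq> x \<odot> (y \<odot> k)"
    using emul_mono[OF ext_le_refl k(1)] emul_mono[OF ext_le_refl k(2)] by auto
  then show ?thesis using ext_le_trans[OF _ k(2)] ext_le_trans[OF k(1)] by blast
qed (cases x; cases y; auto simp: entails_weak_absorb)+

lemma k_value_emul: "k_value a \<Longrightarrow> k_value b \<Longrightarrow> k_value (a \<odot> b)"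
proof (erule k_valueE)
  assume a: "a \<sqsubseteq> Cls One" "Cls One \<sqsubseteq> a" and b: "k_value b"
  show ?thesis using b
  proof (rule k_valueE)
    assume b: "b \<sqsubseteq> Cls One" "Cls One \<sqsubseteq> b"
    have "a \<odot> b \<sqsubseteq> Cls One" using ext_le_trans[OF unit_equiv_emul(3)[OF a] b(1)] .
    moreover have "Cls One \<sqsubseteq> a \<odot> b" using ext_le_trans[OF b(2) unit_equiv_emul(4)[OF a]] .
    ultimately show ?thesis unfolding k_value_def by blast
  next
    fix c assume "W \<in> R" "b = Cls c" "entails c Zero"
    then show ?thesis using a unfolding k_value_def by (cases a) (auto simp: entails_weak_absorb)
  qed (simp add: k_value_def)
next
  fix c assume a: "W \<in> R" "a = Cls c" "entails c Zero" and b: "k_value b"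
  show ?thesis using b
  proof (rule k_valueE)
    assume b: "b \<sqsubseteq> Cls One" "Cls One \<sqsubseteq> b"
    then show ?thesis using a unfolding k_value_def by (cases b) (auto simp: entails_weak_absorb)
  next
    fix e assume "W \<in> R" "b = Cls e" "entails e Zero"
    then show ?thesis using a unfolding k_value_def by (auto simp: entails_weak_absorb)
  qed (simp add: k_value_def)
qed (simp add: k_value_def)

lemma k_value_interp_bang: "k_value (interp (Bang a))"
  by (auto simp: k_value_def)

lemma k_value_interp: "is_k k \<Longrightarrow> k_value (interp_str k)"
proof -
  have "k_tree t \<Longrightarrow> k_value (interp_tree t)" for t
  proof (induction t)
    case (Leaf a)
    then obtain b where "a = Bang b" by auto
    then show ?case using k_value_interp_bang[of b] by (simp only: interp_tree.simps)
  qed (auto intro: k_value_emul)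
  then show "is_k k \<Longrightarrow> k_value (interp_str k)" by (cases k) (auto simp: is_k_def k_value_def)
qed

lemma k_value_bang_r: "k_value k \<Longrightarrow> k \<sqsubseteq> interp a \<Longrightarrow> k \<sqsubseteq> interp (Bang a)"
proof (erule k_valueE)
  assume k: "k \<sqsubseteq> Cls One" "Cls One \<sqsubseteq> k" "k \<sqsubseteq> interp a"
  then have "Cls One \<sqsubseteq> interp a" using ext_le_trans by blast
  then show ?thesis using k by simp
next
  fix c assume "W \<in> R" "k = Cls c" "entails c Zero"
  then show ?thesis
    by (auto simp: entails_weak_from_zero[of _ One] entails_weak_from_zero[of _ Zero])
qed simp

lemma interp_bang_le: "interp (Bang a) \<sqsubseteq> interp a"
  using interp_weak[of a] by (auto simp: entails_weak_zero)

lemma interp_comp_assoc: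
  "interp_str (comp x (comp y z)) \<sqsubseteq> interp_str x \<odot> (interp_str y \<odot> interp_str z)"
  "interp_str x \<odot> (interp_str y \<odot> interp_str z) \<sqsubseteq> interp_str (comp x (comp y z))"
  "interp_str (comp (comp x y) z) \<sqsubseteq> interp_str x \<odot> interp_str y \<odot> interp_str z"
  "interp_str x \<odot> interp_str y \<odot> interp_str z \<sqsubseteq> interp_str (comp (comp x y) z)"
  by (rule ext_le_trans[OF interp_comp_le emul_mono[OF ext_le_refl interp_comp_le]]
        ext_le_trans[OF emul_mono[OF ext_le_refl interp_comp_ge] interp_comp_ge]
        ext_le_trans[OF interp_comp_le emul_mono[OF interp_comp_le ext_le_refl]]
        ext_le_trans[OF emul_mono[OF interp_comp_ge ext_le_refl] interp_comp_ge])+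

lemma interp_k_weaken: "is_k k \<Longrightarrow> interp_str k \<sqsubseteq> interp_str None"
  using k_value_le_one[OF k_value_interp] by simp

lemma interp_k_contract: "is_k k \<Longrightarrow> interp_str k \<sqsubseteq> interp_str (comp k k)"
  using ext_le_trans[OF k_value_le_square[OF k_value_interp] interp_comp_ge] by blast

lemma interp_k_exchange:
  assumes "is_k k"
  shows "interp_str (comp y k) \<sqsubseteq> interp_str (comp k y)"
    and "interp_str (comp k y) \<sqsubseteq> interp_str (comp y k)"
proof -
  note central = k_value_central[OF k_value_interp[OF assms], of "interp_str y"]
  show "interp_str (comp y k) \<sqsubseteq> interp_str (comp k y)"
    using ext_le_trans[OF interp_comp_le ext_le_trans[OF conjunct1[OF central] interp_comp_ge]] .
  show "interp_str (comp k y) \<sqsubseteq> interp_str (comp y k)"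
    using ext_le_trans[OF interp_comp_le ext_le_trans[OF conjunct2[OF central] interp_comp_ge]] .
qed

lemma interp_k_assoc:
  assumes "is_k k"
  shows "interp_str (comp k (comp y z)) \<sqsubseteq> interp_str (comp (comp k y) z)"
    and "interp_str (comp (comp k y) z) \<sqsubseteq> interp_str (comp k (comp y z))"
    and "interp_str (comp x (comp y k)) \<sqsubseteq> interp_str (comp (comp x y) k)"
    and "interp_str (comp (comp x y) k) \<sqsubseteq> interp_str (comp x (comp y k))"
proof -
  note left = k_value_assoc_left[OF k_value_interp[OF assms], of "interp_str y" "interp_str z"]
  note right = k_value_assoc_right[OF k_value_interp[OF assms], of "interp_str x" "interp_str y"]
  show "interp_str (comp k (comp y z)) \<sqsubseteq> interp_str (comp (comp k y) z)"
    using interp_comp_assoc(1) conjunct2[OF left] interp_comp_assoc(4)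
    by (rule ext_le_trans[OF ext_le_trans])
  show "interp_str (comp (comp k y) z) \<sqsubseteq> interp_str (comp k (comp y z))"
    using interp_comp_assoc(3) conjunct1[OF left] interp_comp_assoc(2)
    by (rule ext_le_trans[OF ext_le_trans])
  show "interp_str (comp x (comp y k)) \<sqsubseteq> interp_str (comp (comp x y) k)"
    using interp_comp_assoc(1) conjunct2[OF right] interp_comp_assoc(4)
    by (rule ext_le_trans[OF ext_le_trans])
  show "interp_str (comp (comp x y) k) \<sqsubseteq> interp_str (comp x (comp y k))"
    using interp_comp_assoc(3) conjunct1[OF right] interp_comp_assoc(2)
    by (rule ext_le_trans[OF ext_le_trans])
qed

lemma interp_exchange: "E \<in> R \<Longrightarrow> interp_str (comp y x) \<sqsubseteq> interp_str (comp x y)"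
  using ext_le_trans[OF interp_comp_le ext_le_trans[OF ext_exch interp_comp_ge]] by blast

lemma interp_contract: "C \<in> R \<Longrightarrow> interp_str x \<sqsubseteq> interp_str (comp x x)"
  using ext_le_trans[OF ext_contr interp_comp_ge] by blast

lemma interp_weaken: "W \<in> R \<Longrightarrow> interp_str x \<sqsubseteq> interp_str None"
  using interp_str_weak[of x] by (auto simp: entails_weak_one)

lemma interp_ldiv_l:
  assumes "interp_str x \<sqsubseteq> interp a"
  shows "interp_str (comp x (fml (Ldiv a b))) \<sqsubseteq> interp b"
proof -
  have "interp_str x \<odot> eldiv (interp a) (interp b) \<sqsubseteq> interp a \<odot> eldiv (interp a) (interp b)"
    using assms by (rule emul_mono) simp
  also have "\<dots> \<sqsubseteq> interp b" by (simp add: ext_res_l)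
  finally show ?thesis by (simp add: interp_comp_le_iff)
qed

lemma interp_rdiv_l:
  assumes "interp_str x \<sqsubseteq> interp a"
  shows "interp_str (comp (fml (Rdiv b a)) x) \<sqsubseteq> interp b"
proof -
  have "erdiv (interp b) (interp a) \<odot> interp_str x \<sqsubseteq> erdiv (interp b) (interp a) \<odot> interp a"
    using assms by (intro emul_mono) simp_all
  also have "\<dots> \<sqsubseteq> interp b" by (simp add: ext_res_r)
  finally show ?thesis by (simp add: interp_comp_le_iff)
qed

theorem interp_sound: "der True cy R {} s \<Longrightarrow> interp_str (fst s) \<sqsubseteq> interp_stoup (snd s)"
proof (induction rule: der.induct)
  case (rule ps s)
  have IH: "\<forall>p\<in>set ps. interp_str (fst p) \<sqsubseteq> interp_stoup (snd p)" using rule by fastforce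
  from rule(1) IH show ?case
  proof cases
    case (ax_dn1 a) then show ?thesis using ext_dn1 by (simp add: tneg_def mneg_def)
  next
    case (ax_dn2 a) then show ?thesis using ext_dn2 by (simp add: tneg_def mneg_def)
  next
    case (ax_cd1 a b) then show ?thesis using ext_cd1 by (simp add: tneg_def mneg_def)
  next
    case (ax_cd2 a b) then show ?thesis using ext_cd2 by (simp add: tneg_def mneg_def)
  next
    case (ax_cy1 a)
    have "interp (tneg a) \<sqsubseteq> interp (mneg a)" using ext_cy1[OF \<open>cy\<close>] by (simp add: tneg_def mneg_def)
    then show ?thesis using \<open>s = (fml (tneg a), Some (mneg a))\<close> by simp
  next
    case (ax_cy2 a)
    have "interp (mneg a) \<sqsubseteq> interp (tneg a)" using ext_cy2[OF \<open>cy\<close>] by (simp add: tneg_def mneg_def)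
    then show ?thesis using \<open>s = (fml (mneg a), Some (tneg a))\<close> by simp
  next
    case (cut x a u d) then show ?thesis using IH ctx_mono[of x "fml a" u] by simp
  next
    case (one_l u d) then show ?thesis using IH ctx_mono[of "fml One" None u] by simp
  next
    case (ldiv_l x a u b d)
    then show ?thesis
      using IH interp_ldiv_l ctx_mono[of "comp x (fml (Ldiv a b))" "fml b" u] by simp
  next
    case (ldiv_r a x b) then show ?thesis using IH by (simp add: interp_comp_le_iff ext_res_l)
  next
    case (rdiv_l x a u b d)
    then show ?thesis
      using IH interp_rdiv_l ctx_mono[of "comp (fml (Rdiv b a)) x" "fml b" u] by simp
  next
    case (rdiv_r x a b) then show ?thesis using IH by (simp add: interp_comp_le_iff ext_res_r)
  next
    case (dot_l u a b d)
    then show ?thesis using IH ctx_mono[of "fml (Dot a b)" "comp (fml a) (fml b)" u] by simp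
  next
    case (dot_r x a y b)
    then show ?thesis using IH ext_le_trans[OF interp_comp_le emul_mono] by simp
  next
    case (and_l1 u a d b)
    then show ?thesis using IH ctx_mono[of "fml (And a b)" "fml a" u] emeet_le1 by simp
  next
    case (and_l2 u b d a)
    then show ?thesis using IH ctx_mono[of "fml (And a b)" "fml b" u] emeet_le2 by simp
  next
    case (and_r x a b) then show ?thesis using IH emeet_greatest by simp
  next
    case (or_l u a d b) then show ?thesis using IH ctx_join[of u a _ b] by simp
  next
    case (or_r1 x a b) then show ?thesis using IH ext_le_trans[OF _ ejoin_ge1] by simp
  next
    case (or_r2 x b a) then show ?thesis using IH ext_le_trans[OF _ ejoin_ge2] by simp
  next
    case (bang_l u a d)
    then show ?thesis using IH ctx_mono[of "fml (Bang a)" "fml a" u] interp_bang_le by simp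
  next
    case (bang_r k a) then show ?thesis using IH k_value_bang_r[OF k_value_interp] by simp
  next
    case (kw k u d) then show ?thesis using IH ctx_mono[of k None u] interp_k_weaken by simp
  next
    case (kc k u d) then show ?thesis using IH ctx_mono[of k "comp k k" u] interp_k_contract by simp
  next
    case (ke1 k u y d)
    then show ?thesis using IH ctx_mono[of "comp y k" "comp k y" u] interp_k_exchange by simp
  next
    case (ke2 k u y d)
    then show ?thesis using IH ctx_mono[of "comp k y" "comp y k" u] interp_k_exchange by simp
  next
    case (ka1a k u y z d)
    then show ?thesis
      using IH ctx_mono[of "comp k (comp y z)" "comp (comp k y) z" u] interp_k_assoc by simp
  next
    case (ka1b k u y z d)
    then show ?thesis
      using IH ctx_mono[of "comp (comp k y) z" "comp k (comp y z)" u] interp_k_assoc by simp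
  next
    case (ka2a k u x y d)
    then show ?thesis
      using IH ctx_mono[of "comp x (comp y k)" "comp (comp x y) k" u] interp_k_assoc by simp
  next
    case (ka2b k u x y d)
    then show ?thesis
      using IH ctx_mono[of "comp (comp x y) k" "comp x (comp y k)" u] interp_k_assoc by simp
  next
    case (exch u x y d)
    then show ?thesis using IH ctx_mono[of "comp y x" "comp x y" u] interp_exchange by simp
  next
    case (contr u x d)
    then show ?thesis using IH ctx_mono[of x "comp x x" u] interp_contract by simp
  next
    case (weak_i u d x) then show ?thesis using IH ctx_mono[of x None u] interp_weaken by simp
  next
    case (weak_o x a)
    then show ?thesis using IH interp_weak[of a] ext_le_trans by (auto simp: entails_weak_zero)
  qed simp_all
qed simp

lemma entails_bang_free_iff: "bang_free a \<Longrightarrow> bang_free b \<Longrightarrow> entails a b \<longleftrightarrow> derives a b"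
  by (simp add: entails_def strip_bang_id)

lemma interp_tau_hyp:
  assumes "s \<in> S" and "seq_bf s"
  shows "interp (tau s) = Cls One"
proof -
  obtain y d where s: "s = (y, d)" by (cases s)
  have bf: "str_bf y" "bang_free (theta d)"
    using assms(2) s by (auto simp: theta_def seq_bf_def split: option.splits)
  have "der False cy R S (y, d)" using der.hyp assms s by simp
  then have "der False cy R S (fml (rho y), Some (theta d))"
    using der_iff_formula[OF bf(1)] by blast
  then have "entails (rho y) (theta d)" using bf entails_bang_free_iff by simp
  then have "entails (Dot (rho y) One) (theta d)" using entails_trans[OF entails_unit_r1] by blast
  then have "Cls One \<sqsubseteq> interp (Ldiv (rho y) (theta d))"
    using bf by (simp add: entails_res_l interp_bang_free)
  then show ?thesis by (simp add: tau_def s)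
qed

lemma one_le_interp_nest:
  "ss \<noteq> [] \<Longrightarrow> \<forall>s\<in>set ss. s \<in> S \<and> seq_bf s \<Longrightarrow> Cls One \<sqsubseteq> interp_tree (nest ss)"
proof (induction ss rule: nest.induct)
  case (3 s t ts)
  then have "Cls One \<odot> Cls One \<sqsubseteq> interp (tau s) \<odot> interp_tree (nest (t # ts))"
    by (intro emul_mono) (auto simp: interp_tau_hyp)
  then show ?case using ext_le_trans[OF ext_unit_l2] by simp
qed (auto simp: interp_tau_hyp)

lemma der_remove_nest:
  assumes "ss \<noteq> []" and "\<forall>s\<in>set ss. s \<in> S \<and> seq_bf s" and "seq_bf (x, d)"
    and "der True cy R {} (comp x (Some (nest ss)), d)"
  shows "der False cy R S (x, d)"
proof -
  have bf: "str_bf x" "bang_free (theta d)"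
    using assms(3) by (auto simp: theta_def seq_bf_def split: option.splits)
  have "interp_str x \<odot> interp_tree (nest ss) \<sqsubseteq> interp_stoup d"
    using interp_sound[OF assms(4)] by (simp add: interp_comp_le_iff)
  moreover have "interp_str x \<odot> Cls One \<sqsubseteq> interp_str x \<odot> interp_tree (nest ss)"
    by (rule emul_mono[OF ext_le_refl one_le_interp_nest[OF assms(1,2)]])
  ultimately have "interp_str x \<sqsubseteq> interp_stoup d"
    using ext_le_trans[OF ext_unit_r2] ext_le_trans by blast
  then have "entails (rho x) (theta d)"
    using interp_str_bang_free[OF bf(1)] interp_stoup_bang_free[OF assms(3)] by simp
  then have "der False cy R S (fml (rho x), Some (theta d))" using entails_bang_free_iff bf by simp
  then show ?thesis using der_iff_formula[OF bf(1)] by blast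
qed

end

theorem mainTheorem19:
  fixes R :: "srule set" and ss :: "seq list" and x :: str and \<delta> :: "fm option"
  assumes "ss \<noteq> []"
    and "\<forall>s\<in>set ss. seq_bf s"
    and "seq_bf (x, \<delta>)"
  shows "(InFNL R (set ss) (x, \<delta>) \<longleftrightarrow> NACCLLm R (comp x (Some (nest ss)), \<delta>))
       \<and> (CyInFNL R (set ss) (x, \<delta>) \<longleftrightarrow> NACCLL R (comp x (Some (nest ss)), \<delta>))"
proof -
  have K: "is_k (Some (nest ss))" using k_tree_nest[OF assms(1)] by (simp add: is_k_def)
  have "der False cy R (set ss) (x, \<delta>) \<longleftrightarrow> der True cy R {} (comp x (Some (nest ss)), \<delta>)" for cy
  proof
    assume "der False cy R (set ss) (x, \<delta>)"
    then show "der True cy R {} (comp x (Some (nest ss)), \<delta>)"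
      using der_append_k_simulation[OF K] der_hyp_nest by fastforce
  next
    assume "der True cy R {} (comp x (Some (nest ss)), \<delta>)"
    then show "der False cy R (set ss) (x, \<delta>)"
      using bang_free_fragment.der_remove_nest[OF assms(1) _ assms(3)] assms(2) by blast
  qed
  then show ?thesis unfolding InFNL_def CyInFNL_def NACCLLm_def NACCLL_def by blast
qed

end
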